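(* Let $P\subset\mathbb{R}^d$ be a simple $d$-dimensional polytope with facets $\sigma_1,\dots,\sigma_N$, and let $q_1,\dots,q_N\in\mathbb{C}$ be arbitrary weights assigned to these facets. Then, as functions on $\mathbb{R}^d$, $$\mathbf 1^w_P=\sum_{F\preceq P}(-1)^{\dim F}\,\mathbf 1^w_{\mathbf C_F},$$ where the sum runs over all nonempty faces $F$ of $P$ (including $F=P$, for which $\mathbf C_P=\mathbb{R}^d$ and $\mathbf 1^w_{\mathbf C_P}\equiv 1$).
   Context: A $d$-dimensional polyhedron $Q\subset\mathbb{R}^d$ is written irredundantly as $Q=H_1\cap\dots\cap H_N$ with $H_i=\{x:\langle u_i,x\rangle+\mu_i\ge 0\}$, $u_i\in(\mathbb{R}^d)^*$, $\mu_i\in\mathbb{R}$, $N$ minimal; its facets are $\sigma_i=Q\cap\partial H_i$. A polytope is a bounded polyhedron. $P$ is simple if every vertex lies in exactly $d$ facets. For a nonempty face $F$ of $P$, $I_F$ denotes the set of indices $i$ with $F\subseteq\sigma_i$ (so $F=\bigcap_{i\in I_F}\sigma_i$ for proper faces, and $I_P=\emptyset$). Weighted characteristic function: given complex weights $q_i$ on the facets $\sigma_i$ of a polyhedron $Q$, define $\mathbf 1^w_Q:\mathbb{R}^d\to\mathbb{C}$ by $\mathbf 1^w_Q(x)=0$ if $x\notin Q$, and $\mathbf 1^w_Q(x)=\prod_{i\in I_F}q_i$ if $x\in Q$, where $F$ is the smallest face of $Q$ containing $x$ (equivalently the product of $q_i$ over those facets containing $x$; it equals $1$ for $x$ in the interior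 of $Q$). Tangent cone: for a face $F$ of $P$, $\mathbf C_F=\{y+r(x-y): r\ge 0,\ y\in F,\ x\in P\}$. It is the polyhedron $\bigcap_{i\in I_F}H_i$, whose facets are $\mathbf C_F\cap\partial H_i$ for $i\in I_F$; the facet $\mathbf C_F\cap\partial H_i$ is given the same weight $q_i$ as $\sigma_i$, and $\mathbf 1^w_{\mathbf C_F}$ is the weighted characteristic function of $\mathbf C_F$ with these weights. *)

theory Defs
  imports "HOL-Analysis.Analysis"
begin

definition simple_polytope :: "'a::euclidean_space set \<Rightarrow> bool" where
  "simple_polytope P \<longleftrightarrow> polytope P \<and>
     (\<forall>v. v extreme_point_of P \<longrightarrow> card {S. S facet_of P \<and> v \<in> S} = DIM('a))"

definition wchar :: "'a::euclidean_space set \<Rightarrow> ('a set \<Rightarrow> complex) \<Rightarrow> 'a \<Rightarrow> complex" where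
  "wchar Q w x = (if x \<in> Q then (\<Prod>T\<in>{T. T facet_of Q \<and> x \<in> T}. w T) else 0)"

definition tangent_cone :: "'a::euclidean_space set \<Rightarrow> 'a set \<Rightarrow> 'a set" where
  "tangent_cone P F = {y + r *\<^sub>R (x - y) | r y x. r \<ge> 0 \<and> y \<in> F \<and> x \<in> P}"

definition cone_weight :: "'a::euclidean_space set \<Rightarrow> 'a set \<Rightarrow> ('a set \<Rightarrow> complex) \<Rightarrow> 'a set \<Rightarrow> complex" where
  "cone_weight P F q T =
     q (THE S. S facet_of P \<and> F \<subseteq> S \<and> T = tangent_cone P F \<inter> affine hull S)"

end

theory Submission
  imports Defs
begin

text \<open>Write the facets of P as S = P \<inter> {a S \<bullet> y = b S} and measure the position of y by the
  slacks b S - a S \<bullet> y. At a vertex v of the simple polytope the d facets through v give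
  affine coordinates, so the tangent cone at the face meet J (J a set of facets through v) is
  the simplicial cone {slack S \<ge> 0, S \<in> J}, and its weighted characteristic function is the
  product over S \<in> J of the weighted indicators h S of the half-spaces.

  Fix a linear functional c that is not orthogonal to any edge. Every nonempty face has a
  unique c-minimal vertex v, and the faces whose minimal vertex is v are exactly the meet J with
  D \<subseteq> J \<subseteq> facets at v, where D are the facets whose edge at v descends. Summing the signed
  terms over these J gives the product of h S over D times the product of h S - 1 over the
  facets U whose edge ascends.
  For x outside P take c increasing from every vertex towards x: then every vertex term
  vanishes at x. For x in P expand the products: a set B of facets through x contributes
  the product of h S - 1 over B exactly once, at the (- c)-minimal vertex of meet B, so the
  total is the product of all h S, the weighted characteristic function of P.\<close>

lemma generic_functional_exists:
  fixes X Pos :: "'a::euclidean_space set"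
  assumes "finite X" "0 \<notin> X" "finite Pos" "\<forall>p\<in>Pos. c0 \<bullet> p > 0"
  obtains c where "\<forall>p\<in>Pos. c \<bullet> p > 0" "\<forall>x\<in>X. c \<bullet> x \<noteq> 0"
proof -
  have "\<exists>c. (\<forall>p\<in>Pos. c \<bullet> p > 0) \<and> (\<forall>x\<in>X. c \<bullet> x \<noteq> 0)"
    using assms(1,2)
  proof (induction X rule: finite_induct)
    case empty
    then show ?case using assms(4) by blast
  next
    case (insert e X)
    then obtain c where c: "\<forall>p\<in>Pos. c \<bullet> p > 0" "\<forall>x\<in>X. c \<bullet> x \<noteq> 0"
      by auto
    have lim: "((\<lambda>t. (c + t *\<^sub>R e) \<bullet> y) \<longlongrightarrow> c \<bullet> y) (at_right 0)" for y
    proof -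
      have "((\<lambda>t. c \<bullet> y + t * (e \<bullet> y)) \<longlongrightarrow> c \<bullet> y + 0 * (e \<bullet> y)) (at_right 0)"
        by (intro tendsto_intros)
      then show ?thesis by (simp add: inner_add_left)
    qed
    have pos: "\<forall>\<^sub>F t in at_right 0. \<forall>p\<in>Pos. (c + t *\<^sub>R e) \<bullet> p > 0"
      by (rule eventually_ball_finite[OF assms(3)]) (use c(1) lim order_tendstoD in blast)
    have old: "\<forall>\<^sub>F t in at_right 0. \<forall>x\<in>X. (c + t *\<^sub>R e) \<bullet> x \<noteq> 0"
      by (rule eventually_ball_finite[OF insert(1)]) (use c(2) lim tendsto_imp_eventually_ne in blast)
    have new: "\<forall>\<^sub>F t in at_right 0. (c + t *\<^sub>R e) \<bullet> e \<noteq> 0"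
    proof (cases "c \<bullet> e = 0")
      case True
      have "e \<bullet> e > 0" using insert(4) by auto
      show ?thesis
      proof (rule eventually_mono[OF eventually_at_right_less])
        fix t :: real assume "0 < t"
        then show "(c + t *\<^sub>R e) \<bullet> e \<noteq> 0"
          using True \<open>e \<bullet> e > 0\<close> by (simp add: inner_add_left)
      qed
    next
      case False
      then show ?thesis using lim tendsto_imp_eventually_ne by blast
    qed
    obtain t where "\<forall>p\<in>Pos. (c + t *\<^sub>R e) \<bullet> p > 0" "\<forall>x\<in>insert e X. (c + t *\<^sub>R e) \<bullet> x \<noteq> 0"
      using eventually_happens'[OF _ eventually_conj[OF pos eventually_conj[OF old new]]] by auto
    then show ?case by blast
  qed
  with that show ?thesis by blast
qed

lemma sum_supersets_within:
  assumes "finite U" "D \<inter> U = {}"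
  shows "(\<Sum>J\<in>{J. D \<subseteq> J \<and> J \<subseteq> D \<union> U}. G J) = (\<Sum>K\<in>Pow U. G (D \<union> K))"
proof (rule sum.reindex_bij_witness[of _ "\<lambda>K. D \<union> K" "\<lambda>J. J - D"])
  show "J - D \<in> Pow U" "D \<union> (J - D) = J" if "J \<in> {J. D \<subseteq> J \<and> J \<subseteq> D \<union> U}" for J
    using that by auto
  show "D \<union> K - D = K" "D \<union> K \<in> {J. D \<subseteq> J \<and> J \<subseteq> D \<union> U}" if "K \<in> Pow U" for K
    using that assms(2) by auto
qed (auto simp: Un_absorb1)

lemma sum_supersets_prod_diff_one:
  fixes f :: "'b \<Rightarrow> 'c::comm_ring_1"
  assumes "finite D" "finite U" "D \<inter> U = {}"
  shows "(\<Sum>J\<in>{J. D \<subseteq> J \<and> J \<subseteq> D \<union> U}. (-1) ^ card (D \<union> U - J) * prod f J)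
       = prod f D * (\<Prod>i\<in>U. f i - 1)"
proof -
  have "(\<Sum>J\<in>{J. D \<subseteq> J \<and> J \<subseteq> D \<union> U}. (-1) ^ card (D \<union> U - J) * prod f J)
      = (\<Sum>K\<in>Pow U. (-1) ^ card (D \<union> U - (D \<union> K)) * prod f (D \<union> K))"
    by (rule sum_supersets_within[OF assms(2,3)])
  also have "\<dots> = (\<Sum>K\<in>Pow U. prod f D * (prod f K * (\<Prod>i\<in>U - K. - 1)))"
  proof (rule sum.cong[OF refl])
    fix K assume K: "K \<in> Pow U"
    then have "D \<union> U - (D \<union> K) = U - K" "D \<inter> K = {}" using assms(3) by auto
    moreover have "finite K" using K assms(2) finite_subset by auto
    ultimately show "(-1) ^ card (D \<union> U - (D \<union> K)) * prod f (D \<union> K)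
        = prod f D * (prod f K * (\<Prod>i\<in>U - K. - 1))"
      using assms(1) by (simp add: prod.union_disjoint)
  qed
  also have "\<dots> = prod f D * (\<Prod>i\<in>U. f i + - 1)"
    by (simp only: prod_add[OF assms(2)] sum_distrib_left)
  finally show ?thesis by simp
qed

lemma sum_supersets_prod:
  fixes g :: "'b \<Rightarrow> 'c::comm_semiring_1"
  assumes "finite D" "finite U" "D \<inter> U = {}"
  shows "(\<Sum>J\<in>{J. U \<subseteq> J \<and> J \<subseteq> U \<union> D}. prod g J) = (\<Prod>i\<in>D. g i + 1) * prod g U"
proof -
  have "(\<Sum>J\<in>{J. U \<subseteq> J \<and> J \<subseteq> U \<union> D}. prod g J) = (\<Sum>K\<in>Pow D. prod g (U \<union> K))"
    by (rule sum_supersets_within) (use assms in auto)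
  also have "\<dots> = (\<Sum>K\<in>Pow D. prod g K * prod g U)"
  proof (rule sum.cong[OF refl])
    fix K assume "K \<in> Pow D"
    then show "prod g (U \<union> K) = prod g K * prod g U"
      using assms finite_subset by (subst prod.union_disjoint) (auto simp: mult.commute)
  qed
  also have "\<dots> = (\<Sum>K\<in>Pow D. prod g K * (\<Prod>i\<in>D - K. 1)) * prod g U"
    by (simp add: sum_distrib_right)
  also have "\<dots> = (\<Prod>i\<in>D. g i + 1) * prod g U"
    by (simp only: prod_add[OF assms(1)])
  finally show ?thesis .
qed

lemma polyhedron_facet_normals:
  fixes P :: "'a::euclidean_space set"
  assumes "polyhedron P"
  obtains a b where "\<And>S. S facet_of P \<Longrightarrow>
    a S \<noteq> 0 \<and> P \<subseteq> {x. a S \<bullet> x \<le> b S} \<and> S = P \<inter> {x. a S \<bullet> x = b S}"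
proof -
  have "\<exists>ab. S facet_of P \<longrightarrow> fst ab \<noteq> 0 \<and> P \<subseteq> {x. fst ab \<bullet> x \<le> snd ab}
      \<and> S = P \<inter> {x. fst ab \<bullet> x = snd ab}" for S
    using facet_of_polyhedron[OF assms, of S] by (metis fst_conv snd_conv)
  then obtain ab where "\<And>S. S facet_of P \<Longrightarrow> fst (ab S) \<noteq> 0
      \<and> P \<subseteq> {x. fst (ab S) \<bullet> x \<le> snd (ab S)} \<and> S = P \<inter> {x. fst (ab S) \<bullet> x = snd (ab S)}"
    by metis
  then show ?thesis by (rule that)
qed

locale full_simple_polytope =
  fixes P :: "'a::euclidean_space set" and a :: "'a set \<Rightarrow> 'a" and b :: "'a set \<Rightarrow> real"
  assumes simple: "simple_polytope P"
    and full_dim: "aff_dim P = int DIM('a)"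
    and facet_normal: "\<And>S. S facet_of P \<Longrightarrow>
      a S \<noteq> 0 \<and> P \<subseteq> {x. a S \<bullet> x \<le> b S} \<and> S = P \<inter> {x. a S \<bullet> x = b S}"
begin

definition facets :: "'a set set" where
  "facets = {S. S facet_of P}"

definition vertices :: "'a set" where
  "vertices = {v. v extreme_point_of P}"

definition slack :: "'a set \<Rightarrow> 'a \<Rightarrow> real" where
  "slack S y = b S - a S \<bullet> y"

definition facets_at :: "'a \<Rightarrow> 'a set set" where
  "facets_at v = {S \<in> facets. v \<in> S}"

definition meet :: "'a set set \<Rightarrow> 'a set" where
  "meet J = {y \<in> P. \<forall>S\<in>J. slack S y = 0}"

lemma polytope_P: "polytope P"
  using simple by (simp add: simple_polytope_def)

lemma polyhedron_P: "polyhedron P"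
  by (simp add: polytope_P polytope_imp_polyhedron)

lemma convex_P: "convex P"
  by (simp add: polytope_P polytope_imp_convex)

lemma closed_P: "closed P"
  by (simp add: polytope_P polytope_imp_closed)

lemma compact_P: "compact P"
  by (simp add: polytope_P polytope_imp_compact)

lemma affine_hull_P: "affine hull P = UNIV"
  using full_dim aff_dim_eq_full by blast

lemma finite_facets: "finite facets"
  by (simp add: facets_def finite_polytope_facets polytope_P)

lemma finite_vertices: "finite vertices"
  by (simp add: vertices_def finite_polyhedron_extreme_points polyhedron_P)

lemma normal_nonzero: "S \<in> facets \<Longrightarrow> a S \<noteq> 0"
  using facet_normal unfolding facets_def by blast

lemma slack_nonneg: "S \<in> facets \<Longrightarrow> y \<in> P \<Longrightarrow> 0 \<le> slack S y"
proof -
  assume "S \<in> facets" "y \<in> P"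
  then have "a S \<bullet> y \<le> b S" using facet_normal unfolding facets_def by blast
  then show ?thesis by (simp add: slack_def)
qed

lemma facet_eq_slack_zero:
  assumes "S \<in> facets"
  shows "S = {y \<in> P. slack S y = 0}"
proof -
  have "S = P \<inter> {x. a S \<bullet> x = b S}"
    using facet_normal[of S] assms unfolding facets_def by blast
  then have "y \<in> S \<longleftrightarrow> y \<in> P \<and> a S \<bullet> y = b S" for y
    by blast
  then show ?thesis unfolding slack_def by (intro set_eqI) (simp, linarith)
qed

lemma slack_add: "slack S (y + w) = slack S y - a S \<bullet> w"
  by (simp add: slack_def inner_add_right)

lemma slack_pos_not_in_facet: "S \<in> facets \<Longrightarrow> y \<in> P \<Longrightarrow> y \<notin> S \<Longrightarrow> 0 < slack S y"
  using slack_nonneg facet_eq_slack_zero by fastforce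

lemma slack_pos_interior:
  assumes "p \<in> interior P" "S \<in> facets"
  shows "0 < slack S p"
proof -
  have "rel_interior P = P - \<Union>facets"
    by (simp add: facets_def rel_interior_of_polyhedron polyhedron_P)
  then have "p \<in> P" "p \<notin> S"
    using assms rel_interior_interior[OF affine_hull_P] by auto
  then show ?thesis using slack_pos_not_in_facet assms(2) by blast
qed

lemma P_eq_slack_nonneg: "P = {y. \<forall>S\<in>facets. 0 \<le> slack S y}"
proof
  show "P \<subseteq> {y. \<forall>S\<in>facets. 0 \<le> slack S y}"
    using slack_nonneg by blast
  show "{y. \<forall>S\<in>facets. 0 \<le> slack S y} \<subseteq> P"
  proof
    fix y assume y: "y \<in> {y. \<forall>S\<in>facets. 0 \<le> slack S y}"
    show "y \<in> P"
    proof (rule ccontr)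
      assume "y \<notin> P"
      have "rel_interior P \<noteq> {}"
        using convex_P full_dim rel_interior_eq_empty by fastforce
      then obtain p where p: "p \<in> interior P"
        using rel_interior_interior[OF affine_hull_P] by blast
      then have "p \<in> P" using interior_subset by blast
      then have "closed_segment p y \<inter> frontier P \<noteq> {}"
        using \<open>y \<notin> P\<close> by (intro connected_Int_frontier) auto
      then obtain z where z: "z \<in> closed_segment p y" "z \<in> rel_frontier P"
        by (auto simp: frontier_def rel_frontier_def affine_hull_P rel_interior_interior closed_P)
      then obtain S where S: "S \<in> facets" "z \<in> S"
        using rel_frontier_of_polyhedron[OF polyhedron_P] by (auto simp: facets_def)
      obtain u where u: "0 \<le> u" "u \<le> 1" "z = (1 - u) *\<^sub>R p + u *\<^sub>R y"
        using z(1) by (auto simp: in_segment)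
      have "z \<in> P" using S facet_eq_slack_zero by blast
      then have "u \<noteq> 1" using u \<open>y \<notin> P\<close> by auto
      have "slack S z = (1 - u) * slack S p + u * slack S y"
        unfolding u(3) slack_def by (simp add: algebra_simps)
      moreover have "0 < (1 - u) * slack S p"
        using slack_pos_interior[OF p S(1)] u \<open>u \<noteq> 1\<close> by simp
      moreover have "0 \<le> u * slack S y" using y S u by simp
      moreover have "slack S z = 0" using facet_eq_slack_zero S by blast
      ultimately show False by linarith
    qed
  qed
qed

lemma vertex_in_P: "v \<in> vertices \<Longrightarrow> v \<in> P"
  by (simp add: vertices_def extreme_point_of_def)

lemma finite_facets_at: "finite (facets_at v)"
  using finite_facets by (simp add: facets_at_def)

lemma facets_at_subset: "facets_at v \<subseteq> facets"
  by (auto simp: facets_at_def)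

lemma slack_facets_at: "S \<in> facets_at v \<Longrightarrow> slack S v = 0"
  using facet_eq_slack_zero by (auto simp: facets_at_def)

lemma card_facets_at: "v \<in> vertices \<Longrightarrow> card (facets_at v) = DIM('a)"
  using simple by (simp add: simple_polytope_def vertices_def facets_at_def facets_def)

lemma eventually_slack_pos:
  assumes "finite X" "\<forall>T\<in>X. 0 < slack T y"
  shows "\<forall>\<^sub>F t in at_right 0. \<forall>T\<in>X. 0 < slack T (y + t *\<^sub>R w)"
proof (rule eventually_ball_finite[OF assms(1)], rule ballI)
  fix T assume T: "T \<in> X"
  have "((\<lambda>t. slack T y - t * (a T \<bullet> w)) \<longlongrightarrow> slack T y - 0 * (a T \<bullet> w)) (at_right 0)"
    by (intro tendsto_intros)
  then have "((\<lambda>t. slack T (y + t *\<^sub>R w)) \<longlongrightarrow> slack T y) (at_right 0)"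
    by (simp add: slack_add)
  then show "\<forall>\<^sub>F t in at_right 0. 0 < slack T (y + t *\<^sub>R w)"
    using assms(2) T order_tendstoD by blast
qed

lemma eventually_feasible_direction:
  assumes "v \<in> P" "\<forall>T\<in>facets_at v. a T \<bullet> w \<le> 0"
  shows "\<forall>\<^sub>F t in at_right 0. 0 < t \<and> v + t *\<^sub>R w \<in> P
    \<and> (\<forall>T\<in>facets - facets_at v. 0 < slack T (v + t *\<^sub>R w))"
proof -
  have "\<forall>T\<in>facets - facets_at v. 0 < slack T v"
    using assms(1) slack_pos_not_in_facet by (auto simp: facets_at_def)
  then have "\<forall>\<^sub>F t in at_right 0. 0 < t \<and> (\<forall>T\<in>facets - facets_at v. 0 < slack T (v + t *\<^sub>R w))"
    using finite_facets eventually_at_right_less eventually_slack_pos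
    by (intro eventually_conj) auto
  then show ?thesis
  proof (rule eventually_mono)
    fix t assume t: "0 < t \<and> (\<forall>T\<in>facets - facets_at v. 0 < slack T (v + t *\<^sub>R w))"
    have "0 \<le> slack T (v + t *\<^sub>R w)" if "T \<in> facets" for T
    proof (cases "T \<in> facets_at v")
      case True
      then show ?thesis
        using assms(2) t slack_facets_at by (simp add: slack_add mult_nonneg_nonpos)
    next
      case False
      then show ?thesis using t that by (meson DiffI less_imp_le)
    qed
    then have "v + t *\<^sub>R w \<in> P"
      by (subst P_eq_slack_nonneg) blast
    then show "0 < t \<and> v + t *\<^sub>R w \<in> P \<and> (\<forall>T\<in>facets - facets_at v. 0 < slack T (v + t *\<^sub>R w))"
      using t by blast
  qed
qed

lemma feasible_direction:
  assumes "v \<in> P" "\<forall>T\<in>facets_at v. a T \<bullet> w \<le> 0"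
  obtains t where "0 < t" "v + t *\<^sub>R w \<in> P" "\<forall>T\<in>facets - facets_at v. 0 < slack T (v + t *\<^sub>R w)"
  using eventually_happens'[OF trivial_limit_at_right_real eventually_feasible_direction[OF assms]]
  by blast

lemma vertex_normals_orthogonal_imp_zero:
  assumes v: "v \<in> vertices" and w: "\<forall>T\<in>facets_at v. a T \<bullet> w = 0"
  shows "w = 0"
proof (rule ccontr)
  assume "w \<noteq> 0"
  have "v \<in> P" using v vertex_in_P by blast
  have "\<forall>\<^sub>F t in at_right 0. (0 < t \<and> v + t *\<^sub>R w \<in> P) \<and> v + t *\<^sub>R (- w) \<in> P"
    using eventually_conj[OF eventually_feasible_direction[OF \<open>v \<in> P\<close>, of w]
        eventually_feasible_direction[OF \<open>v \<in> P\<close>, of "- w"]] w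
    by (auto elim: eventually_mono)
  then obtain t where t: "0 < t" "v + t *\<^sub>R w \<in> P" "v + t *\<^sub>R (- w) \<in> P"
    using eventually_happens'[OF trivial_limit_at_right_real] by blast
  have "v + t *\<^sub>R (- w) \<noteq> v + t *\<^sub>R w"
    using t(1) \<open>w \<noteq> 0\<close> by (smt (verit, best) add_left_cancel scaleR_minus_left scaleR_minus_right scaleR_right_imp_eq)
  moreover have "midpoint (v + t *\<^sub>R (- w)) (v + t *\<^sub>R w) = v"
    by (simp add: midpoint_def algebra_simps flip: scaleR_add_left)
  ultimately have "v \<in> open_segment (v + t *\<^sub>R (- w)) (v + t *\<^sub>R w)"
    using midpoint_in_open_segment by metis
  then show False using v t unfolding vertices_def extreme_point_of_def by blast
qed

lemma edge_dir_exists: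
  assumes v: "v \<in> vertices" and S: "S \<in> facets_at v"
  shows "\<exists>w. \<forall>T\<in>facets_at v. a T \<bullet> w = (if T = S then -1 else 0)"
proof -
  let ?X = "a ` (facets_at v - {S})"
  have "dim ?X \<le> card ?X"
    by (rule dim_le_card) (auto intro: span_base simp: finite_facets_at)
  also have "\<dots> \<le> card (facets_at v - {S})"
    by (rule card_image_le) (simp add: finite_facets_at)
  also have "\<dots> < DIM('a)"
    using card_facets_at[OF v] S finite_facets_at by (simp add: card_Diff_singleton)
  finally obtain w0 where w0: "w0 \<noteq> 0" "\<And>y. y \<in> span ?X \<Longrightarrow> orthogonal w0 y"
    using orthogonal_to_subspace_exists by blast
  have other: "a T \<bullet> w0 = 0" if "T \<in> facets_at v - {S}" for T
  proof -
    have "a T \<in> span ?X" using that by (intro span_base) blast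
    then show ?thesis using w0(2) by (metis inner_commute orthogonal_def)
  qed
  then have "a S \<bullet> w0 \<noteq> 0"
    using vertex_normals_orthogonal_imp_zero[OF v, of w0] w0(1) by auto
  then show ?thesis
    using other by (intro exI[of _ "(- 1 / (a S \<bullet> w0)) *\<^sub>R w0"]) auto
qed

text \<open>At a vertex of the simple polytope P the facet normals form a basis; edge_dir v S is
  (minus) the dual basis vector, i.e. the direction of the edge at v that leaves the facet S.\<close>
definition edge_dir :: "'a \<Rightarrow> 'a set \<Rightarrow> 'a" where
  "edge_dir v S = (SOME w. \<forall>T\<in>facets_at v. a T \<bullet> w = (if T = S then -1 else 0))"

lemma inner_normal_edge_dir:
  assumes "v \<in> vertices" "S \<in> facets_at v" "T \<in> facets_at v"
  shows "a T \<bullet> edge_dir v S = (if T = S then -1 else 0)"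
  using someI_ex[OF edge_dir_exists[OF assms(1,2)]] assms(3) by (simp add: edge_dir_def)

lemma slack_along_edge_dir:
  assumes "v \<in> vertices" "S \<in> facets_at v" "T \<in> facets_at v"
  shows "slack T (v + t *\<^sub>R edge_dir v S) = (if T = S then t else 0)"
  using inner_normal_edge_dir[OF assms] slack_facets_at[OF assms(3)] by (simp add: slack_add)

lemma inner_normal_sum_edge_dir:
  assumes v: "v \<in> vertices" and T: "T \<in> facets_at v" and K: "K \<subseteq> facets_at v"
  shows "a T \<bullet> (\<Sum>S\<in>K. f S *\<^sub>R edge_dir v S) = (if T \<in> K then - f T else 0)"
proof -
  have "a T \<bullet> (\<Sum>S\<in>K. f S *\<^sub>R edge_dir v S) = (\<Sum>S\<in>K. f S * (a T \<bullet> edge_dir v S))"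
    by (simp add: inner_sum_right)
  also have "\<dots> = (\<Sum>S\<in>K. if T = S then - f S else 0)"
    using inner_normal_edge_dir[OF v _ T] K by (intro sum.cong refl) (simp add: subsetD)
  also have "\<dots> = (if T \<in> K then - f T else 0)"
    using finite_subset[OF K finite_facets_at] by (simp add: sum.delta)
  finally show ?thesis .
qed

lemma vertex_coordinates:
  assumes v: "v \<in> vertices"
  shows "y - v = (\<Sum>S\<in>facets_at v. slack S y *\<^sub>R edge_dir v S)"
proof -
  have "a T \<bullet> (y - v - (\<Sum>S\<in>facets_at v. slack S y *\<^sub>R edge_dir v S)) = 0"
    if T: "T \<in> facets_at v" for T
  proof -
    have "a T \<bullet> (\<Sum>S\<in>facets_at v. slack S y *\<^sub>R edge_dir v S) = - slack T y"
      using inner_normal_sum_edge_dir[OF v T order_refl, of "\<lambda>S. slack S y"] T by simp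
    then show ?thesis using slack_facets_at[OF T] by (simp add: slack_def inner_diff_right)
  qed
  then show ?thesis using vertex_normals_orthogonal_imp_zero[OF v] by force
qed

lemma inner_diff_vertex:
  assumes "v \<in> vertices"
  shows "c \<bullet> y - c \<bullet> v = (\<Sum>S\<in>facets_at v. slack S y * (c \<bullet> edge_dir v S))"
  by (simp add: inner_diff_right[symmetric] vertex_coordinates[OF assms] inner_sum_right)

lemma independent_edge_dirs:
  assumes v: "v \<in> vertices"
  shows "inj_on (edge_dir v) (facets_at v)" "independent (edge_dir v ` facets_at v)"
proof -
  show inj: "inj_on (edge_dir v) (facets_at v)"
    using inner_normal_edge_dir[OF v] by (intro inj_onI) (metis neg_equal_0_iff_equal zero_neq_one)
  show "independent (edge_dir v ` facets_at v)"
  proof (rule independent_if_scalars_zero)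
    fix f x assume f: "(\<Sum>x\<in>edge_dir v ` facets_at v. f x *\<^sub>R x) = 0"
      and x: "x \<in> edge_dir v ` facets_at v"
    then obtain S where S: "S \<in> facets_at v" "x = edge_dir v S" by blast
    have "(\<Sum>T\<in>facets_at v. f (edge_dir v T) *\<^sub>R edge_dir v T) = 0"
      using f by (simp add: sum.reindex[OF inj])
    then show "f x = 0"
      using inner_normal_sum_edge_dir[OF v S(1) order_refl, of "\<lambda>T. f (edge_dir v T)"] S by simp
  qed (simp add: finite_facets_at)
qed

lemma meet_exists_point_off_other_facets:
  assumes v: "v \<in> vertices" and J: "J \<subseteq> facets_at v"
  obtains y where "y \<in> meet J" "\<forall>T\<in>facets - J. 0 < slack T y"
proof -
  define w where "w = (\<Sum>S\<in>facets_at v - J. 1 *\<^sub>R edge_dir v S)"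
  have aw: "a T \<bullet> w = (if T \<in> J then 0 else -1)" if T: "T \<in> facets_at v" for T
    using inner_normal_sum_edge_dir[OF v T Diff_subset, of "\<lambda>_. 1"] T by (simp add: w_def)
  then have "\<forall>T\<in>facets_at v. a T \<bullet> w \<le> 0" by simp
  then obtain t where t: "0 < t" "v + t *\<^sub>R w \<in> P" "\<forall>T\<in>facets - facets_at v. 0 < slack T (v + t *\<^sub>R w)"
    using feasible_direction[OF vertex_in_P[OF v]] by metis
  have "slack T (v + t *\<^sub>R w) = (if T \<in> J then 0 else t)" if "T \<in> facets_at v" for T
    using aw[OF that] slack_facets_at[OF that] by (simp add: slack_add)
  then have "v + t *\<^sub>R w \<in> meet J" "\<forall>T\<in>facets - J. 0 < slack T (v + t *\<^sub>R w)"
    using t J by (auto simp: meet_def)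
  then show ?thesis using that by blast
qed

lemma meet_subset_facet: "S \<in> facets \<Longrightarrow> S \<in> J \<Longrightarrow> meet J \<subseteq> S"
  using facet_eq_slack_zero by (auto simp: meet_def)

lemma vertex_in_meet: "v \<in> vertices \<Longrightarrow> J \<subseteq> facets_at v \<Longrightarrow> v \<in> meet J"
  using vertex_in_P slack_facets_at by (auto simp: meet_def)

lemma facets_at_meet: "J \<subseteq> facets \<Longrightarrow> v \<in> meet J \<Longrightarrow> J \<subseteq> facets_at v"
  using facet_eq_slack_zero by (auto simp: meet_def facets_at_def)

lemma meet_eq_Inter: "J \<subseteq> facets \<Longrightarrow> meet J = \<Inter>(insert P J)"
  using facet_eq_slack_zero by (auto simp: meet_def)

lemma meet_face_of: "J \<subseteq> facets \<Longrightarrow> meet J face_of P"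
  unfolding meet_eq_Inter
  by (rule face_of_Inter) (auto simp: facets_def face_of_refl convex_P facet_of_imp_face_of)

lemma face_eq_meet:
  assumes F: "F face_of P" "F \<noteq> {}"
  shows "F = meet {S \<in> facets. F \<subseteq> S}"
proof (cases "F = P")
  case True
  have no_facets: "{S \<in> facets. F \<subseteq> S} = {}"
    using True facet_of_imp_subset by (fastforce simp: facets_def)
  show ?thesis unfolding no_facets meet_def using True by simp
next
  case False
  then show ?thesis
    using face_of_polyhedron[OF polyhedron_P F False] face_of_imp_subset[OF F(1)]
    by (subst meet_eq_Inter) (auto simp: facets_def)
qed

lemma vertex_minimizing_on_face:
  assumes F: "F face_of P" "F \<noteq> {}"
  obtains v where "v \<in> F" "v \<in> vertices" "\<forall>y\<in>F. c \<bullet> v \<le> c \<bullet> y"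
proof -
  let ?E = "{x. x extreme_point_of F}"
  have "compact F" "convex F"
    using F face_of_imp_compact face_of_imp_convex compact_P convex_P by blast+
  then have F_hull: "F = convex hull ?E" by (rule Krein_Milman_Minkowski)
  have E: "?E \<subseteq> vertices \<inter> F"
    using extreme_point_of_face[OF F(1)] by (auto simp: vertices_def extreme_point_of_def)
  then have "finite ?E" "?E \<noteq> {}"
    using finite_vertices finite_subset F_hull F(2) by auto
  then obtain v where v: "v \<in> ?E" "\<forall>u\<in>?E. c \<bullet> v \<le> c \<bullet> u"
    using arg_min_if_finite[of ?E "\<lambda>u. c \<bullet> u"] by (meson not_less)
  have "convex hull ?E \<subseteq> {y. c \<bullet> v \<le> c \<bullet> y}"
    using v(2) by (intro hull_minimal) (auto simp: convex_halfspace_ge)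
  then show ?thesis using that v(1) E F_hull by blast
qed

lemma facets_containing_meet:
  assumes J: "J \<subseteq> facets" and ne: "meet J \<noteq> {}"
  shows "{S \<in> facets. meet J \<subseteq> S} = J"
proof
  show "J \<subseteq> {S \<in> facets. meet J \<subseteq> S}" using J meet_subset_facet by blast
  obtain v where v: "v \<in> meet J" "v \<in> vertices"
    using vertex_minimizing_on_face[OF meet_face_of[OF J] ne] by metis
  obtain y where y: "y \<in> meet J" "\<forall>T\<in>facets - J. 0 < slack T y"
    using meet_exists_point_off_other_facets[OF v(2) facets_at_meet[OF J v(1)]] by blast
  show "{S \<in> facets. meet J \<subseteq> S} \<subseteq> J"
  proof
    fix S assume S: "S \<in> {S \<in> facets. meet J \<subseteq> S}"
    then have "slack S y = 0" using y(1) facet_eq_slack_zero by blast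
    then show "S \<in> J" using y(2) S by force
  qed
qed

lemma span_meet_translate:
  assumes v: "v \<in> vertices" and J: "J \<subseteq> facets_at v"
  shows "span ((+) (- v) ` meet J) = span (edge_dir v ` (facets_at v - J))"
proof (rule span_eq[THEN iffD2], rule conjI)
  show "(+) (- v) ` meet J \<subseteq> span (edge_dir v ` (facets_at v - J))"
  proof
    fix z assume "z \<in> (+) (- v) ` meet J"
    then obtain y where y: "y \<in> meet J" "z = y - v" by auto
    have "slack S y *\<^sub>R edge_dir v S \<in> span (edge_dir v ` (facets_at v - J))"
      if "S \<in> facets_at v" for S
      using y(1) that by (cases "S \<in> J") (auto simp: meet_def span_zero intro: span_scale span_base)
    then show "z \<in> span (edge_dir v ` (facets_at v - J))"
      using y(2) vertex_coordinates[OF v, of y] by (simp add: span_sum)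
  qed
  show "edge_dir v ` (facets_at v - J) \<subseteq> span ((+) (- v) ` meet J)"
  proof
    fix x assume "x \<in> edge_dir v ` (facets_at v - J)"
    then obtain S where S: "S \<in> facets_at v" "S \<notin> J" "x = edge_dir v S" by blast
    have "\<forall>T\<in>facets_at v. a T \<bullet> edge_dir v S \<le> 0"
      using inner_normal_edge_dir[OF v S(1)] by simp
    then obtain t where t: "0 < t" "v + t *\<^sub>R x \<in> P"
      using feasible_direction[OF vertex_in_P[OF v]] S(3) by metis
    have "v + t *\<^sub>R x \<in> meet J"
      using t(2) J S slack_along_edge_dir[OF v S(1)] by (auto simp: meet_def)
    then have "t *\<^sub>R x \<in> (+) (- v) ` meet J" by force
    then have "(1 / t) *\<^sub>R (t *\<^sub>R x) \<in> span ((+) (- v) ` meet J)"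
      by (intro span_scale span_base)
    then show "x \<in> span ((+) (- v) ` meet J)" using t(1) by simp
  qed
qed

lemma aff_dim_meet:
  assumes v: "v \<in> vertices" and J: "J \<subseteq> facets_at v"
  shows "aff_dim (meet J) = int (card (facets_at v - J))"
proof -
  let ?K = "facets_at v - J"
  have "aff_dim (meet J) = int (dim ((+) (- v) ` meet J))"
    by (rule aff_dim_eq_dim) (rule hull_inc[OF vertex_in_meet[OF v J]])
  also have "dim ((+) (- v) ` meet J) = dim (edge_dir v ` ?K)"
    by (metis dim_span span_meet_translate[OF v J])
  also have "\<dots> = card (edge_dir v ` ?K)"
    using independent_edge_dirs(2)[OF v]
    by (intro dim_eq_card_independent) (meson Diff_subset image_mono independent_mono)
  also have "\<dots> = card ?K"
    using independent_edge_dirs(1)[OF v] by (intro card_image) (auto intro: inj_on_subset)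
  finally show ?thesis .
qed

definition cone_at :: "'a set set \<Rightarrow> 'a set" where
  "cone_at J = {y. \<forall>S\<in>J. 0 \<le> slack S y}"

definition hyperplane :: "'a set \<Rightarrow> 'a set" where
  "hyperplane S = {y. slack S y = 0}"

definition halfspace :: "'a set \<Rightarrow> 'a set" where
  "halfspace S = {y. 0 \<le> slack S y}"

lemma hyperplane_eq: "hyperplane S = {x. a S \<bullet> x = b S}"
  by (auto simp: hyperplane_def slack_def)

lemma halfspace_eq: "halfspace S = {x. a S \<bullet> x \<le> b S}"
  by (auto simp: halfspace_def slack_def)

lemma cone_at_eq_Inter: "cone_at J = \<Inter>(halfspace ` J)"
  by (auto simp: cone_at_def halfspace_def)

lemma slack_affine: "slack S (y + r *\<^sub>R (x - y)) = slack S y + r * (slack S x - slack S y)"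
  by (simp add: slack_def algebra_simps)

lemma tangent_cone_meet:
  assumes v: "v \<in> vertices" and J: "J \<subseteq> facets_at v"
  shows "tangent_cone P (meet J) = cone_at J"
proof
  show "tangent_cone P (meet J) \<subseteq> cone_at J"
  proof
    fix z assume "z \<in> tangent_cone P (meet J)"
    then obtain r y x where z: "z = y + r *\<^sub>R (x - y)" "0 \<le> r" "y \<in> meet J" "x \<in> P"
      by (auto simp: tangent_cone_def)
    have "0 \<le> slack S z" if "S \<in> J" for S
    proof -
      have "S \<in> facets" using that J facets_at_subset by blast
      then have "slack S y = 0" "0 \<le> slack S x"
        using z(3,4) that slack_nonneg by (auto simp: meet_def)
      then show ?thesis using z(1,2) by (simp add: slack_affine)
    qed
    then show "z \<in> cone_at J" by (simp add: cone_at_def)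
  qed
  show "cone_at J \<subseteq> tangent_cone P (meet J)"
  proof
    fix z assume z: "z \<in> cone_at J"
    obtain y where y: "y \<in> meet J" "\<forall>T\<in>facets - J. 0 < slack T y"
      using meet_exists_point_off_other_facets[OF v J] by blast
    have "a T \<bullet> (z - y) \<le> 0" if T: "T \<in> facets_at y" for T
    proof -
      have "T \<in> facets" "slack T y = 0" using T facets_at_subset slack_facets_at by auto
      moreover from this have "0 \<le> slack T z" using y(2) z by (force simp: cone_at_def)
      ultimately show ?thesis by (simp add: slack_def inner_diff_right)
    qed
    moreover have "y \<in> P" using y(1) by (simp add: meet_def)
    ultimately obtain t where t: "0 < t" "y + t *\<^sub>R (z - y) \<in> P"
      using feasible_direction by metis
    have "z = y + (1 / t) *\<^sub>R ((y + t *\<^sub>R (z - y)) - y)"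
      using t(1) by simp
    then show "z \<in> tangent_cone P (meet J)"
      unfolding tangent_cone_def using y(1) t
      by (intro CollectI exI[of _ "1 / t"] exI[of _ y] exI[of _ "y + t *\<^sub>R (z - y)"]) simp
  qed
qed

lemma affine_hull_facet:
  assumes S: "S \<in> facets"
  shows "affine hull S = hyperplane S"
proof (rule affine_dim_equal)
  show "affine (hyperplane S)" unfolding hyperplane_eq by (rule affine_hyperplane)
  then show "affine hull S \<subseteq> hyperplane S"
    using facet_eq_slack_zero[OF S] by (intro hull_minimal) (auto simp: hyperplane_def)
  show "affine hull S \<noteq> {}" using S by (auto simp: facets_def facet_of_def)
  have "aff_dim (affine hull S) = aff_dim P - 1"
    using S by (simp add: facets_def facet_of_def)
  also have "\<dots> = aff_dim (hyperplane S)"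
    unfolding hyperplane_eq using normal_nonzero[OF S] full_dim by simp
  finally show "aff_dim (affine hull S) = aff_dim (hyperplane S)" .
qed simp

text \<open>The points v \<pm> edge_dir v S separate the inequalities of cone_at J from each other.\<close>
lemma slack_vertex_pm_edge_dir:
  assumes "v \<in> vertices" "S \<in> facets_at v" "T \<in> facets_at v"
  shows "slack T (v + edge_dir v S) = (if T = S then 1 else 0)"
    and "slack T (v - edge_dir v S) = (if T = S then -1 else 0)"
  using slack_along_edge_dir[OF assms, of 1] slack_along_edge_dir[OF assms, of "-1"] by simp_all

lemma affine_hull_cone_at:
  assumes "J \<subseteq> facets"
  shows "affine hull (cone_at J) = UNIV"
proof -
  have "P \<subseteq> cone_at J"
    using assms slack_nonneg by (auto simp: cone_at_def)
  then show ?thesis using affine_hull_P hull_mono by blast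
qed

lemma cone_at_irredundant:
  assumes v: "v \<in> vertices" and J: "J \<subseteq> facets_at v" and S: "S \<in> J"
  shows "v - edge_dir v S \<in> \<Inter>(halfspace ` (J - {S}))" "v - edge_dir v S \<notin> halfspace S"
proof -
  have S_at: "S \<in> facets_at v" using S J by blast
  have "0 \<le> slack T (v - edge_dir v S)" if "T \<in> J" "T \<noteq> S" for T
    using slack_vertex_pm_edge_dir(2)[OF v S_at, of T] that J by auto
  then show "v - edge_dir v S \<in> \<Inter>(halfspace ` (J - {S}))"
    unfolding halfspace_def by blast
  show "v - edge_dir v S \<notin> halfspace S"
    using slack_vertex_pm_edge_dir(2)[OF v S_at S_at] by (simp add: halfspace_def)
qed

lemma inj_on_halfspace:
  assumes v: "v \<in> vertices" and J: "J \<subseteq> facets_at v"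
  shows "inj_on halfspace J"
proof (rule inj_onI, rule ccontr)
  fix S T assume "S \<in> J" "T \<in> J" "halfspace S = halfspace T" "S \<noteq> T"
  then show False using cone_at_irredundant[OF v J, of S] by blast
qed

lemma facet_of_cone_at:
  assumes v: "v \<in> vertices" and J: "J \<subseteq> facets_at v"
  shows "T facet_of cone_at J \<longleftrightarrow> (\<exists>S\<in>J. T = cone_at J \<inter> hyperplane S)"
proof -
  define inv where "inv = the_inv_into J halfspace"
  have inv_halfspace: "inv (halfspace S) = S" if "S \<in> J" for S
    using the_inv_into_f_f[OF inj_on_halfspace[OF v J] that] by (simp add: inv_def)
  have fin: "finite (halfspace ` J)"
    using J finite_facets_at finite_subset by blast
  have hull_UNIV: "affine hull (cone_at J) = UNIV"
    using affine_hull_cone_at J facets_at_subset by blast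
  have C: "cone_at J = affine hull (cone_at J) \<inter> \<Inter>(halfspace ` J)"
    using cone_at_eq_Inter hull_UNIV by simp
  have normal: "a (inv h) \<noteq> 0 \<and> h = {x. a (inv h) \<bullet> x \<le> b (inv h)}" if h: "h \<in> halfspace ` J" for h
  proof -
    obtain S where S: "S \<in> J" "h = halfspace S" using h by blast
    then have "a S \<noteq> 0" using J facets_at_subset normal_nonzero by blast
    then show ?thesis using S inv_halfspace halfspace_eq by simp
  qed
  have irredundant: "cone_at J \<subset> affine hull (cone_at J) \<inter> \<Inter>F'"
    if F': "F' \<subset> halfspace ` J" for F'
  proof -
    obtain S where S: "S \<in> J" "halfspace S \<notin> F'"
      using psubset_imp_ex_mem[OF F'] by blast
    then have "F' \<subseteq> halfspace ` (J - {S})"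
      using psubset_imp_subset[OF F'] by blast
    then have "v - edge_dir v S \<in> \<Inter>F'"
      using cone_at_irredundant(1)[OF v J S(1)] by blast
    moreover have "v - edge_dir v S \<notin> cone_at J"
      using cone_at_irredundant(2)[OF v J S(1)] S(1) cone_at_eq_Inter by blast
    moreover have "cone_at J \<subseteq> \<Inter>F'"
      using psubset_imp_subset[OF F'] cone_at_eq_Inter by (simp add: Inf_superset_mono)
    ultimately show ?thesis unfolding hull_UNIV by blast
  qed
  have "T facet_of cone_at J
      \<longleftrightarrow> (\<exists>h\<in>halfspace ` J. T = cone_at J \<inter> {x. a (inv h) \<bullet> x = b (inv h)})"
    unfolding Bex_def by (rule facet_of_polyhedron_explicit[OF fin C normal irredundant])
  also have "\<dots> \<longleftrightarrow> (\<exists>S\<in>J. T = cone_at J \<inter> hyperplane S)"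
    using inv_halfspace by (simp add: image_iff hyperplane_eq)
  finally show ?thesis .
qed

lemma cone_at_facets_distinct:
  assumes v: "v \<in> vertices" and J: "J \<subseteq> facets_at v" and S: "S \<in> J" "S' \<in> J"
    and eq: "cone_at J \<inter> hyperplane S = cone_at J \<inter> hyperplane S'"
  shows "S = S'"
proof (rule ccontr)
  assume "S \<noteq> S'"
  have "S' \<in> facets_at v" using S J by blast
  then have "slack T (v + edge_dir v S') = (if T = S' then 1 else 0)" if "T \<in> J" for T
    using slack_vertex_pm_edge_dir(1)[OF v] that J by blast
  then have "v + edge_dir v S' \<in> cone_at J \<inter> hyperplane S" "v + edge_dir v S' \<notin> hyperplane S'"
    using S \<open>S \<noteq> S'\<close> by (auto simp: cone_at_def hyperplane_def)
  then show False using eq by blast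
qed

lemma cone_weight_meet:
  assumes v: "v \<in> vertices" and J: "J \<subseteq> facets_at v" and S: "S \<in> J"
  shows "cone_weight P (meet J) q (cone_at J \<inter> hyperplane S) = q S"
proof -
  have JF: "J \<subseteq> facets" using J facets_at_subset by blast
  have ne: "meet J \<noteq> {}" using vertex_in_meet[OF v J] by blast
  have "(THE S'. S' facet_of P \<and> meet J \<subseteq> S'
      \<and> cone_at J \<inter> hyperplane S = tangent_cone P (meet J) \<inter> affine hull S') = S"
  proof (rule the_equality)
    show "S facet_of P \<and> meet J \<subseteq> S
        \<and> cone_at J \<inter> hyperplane S = tangent_cone P (meet J) \<inter> affine hull S"
      using S JF meet_subset_facet tangent_cone_meet[OF v J] affine_hull_facet
      by (auto simp: facets_def)
  next
    fix S' assume S': "S' facet_of P \<and> meet J \<subseteq> S'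
        \<and> cone_at J \<inter> hyperplane S = tangent_cone P (meet J) \<inter> affine hull S'"
    then have "S' \<in> J"
      using facets_containing_meet[OF JF ne] by (auto simp: facets_def)
    moreover have "cone_at J \<inter> hyperplane S = cone_at J \<inter> hyperplane S'"
      using S' tangent_cone_meet[OF v J] affine_hull_facet by (simp add: facets_def)
    ultimately show "S' = S" using cone_at_facets_distinct[OF v J S] by blast
  qed
  then show ?thesis by (simp add: cone_weight_def)
qed

definition half_wchar :: "('a set \<Rightarrow> complex) \<Rightarrow> 'a set \<Rightarrow> 'a \<Rightarrow> complex" where
  "half_wchar q S x = (if slack S x < 0 then 0 else if slack S x = 0 then q S else 1)"

lemma slack_nonneg_if_half_wchar_nonzero: "half_wchar q S x \<noteq> 0 \<Longrightarrow> 0 \<le> slack S x"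
  by (auto simp: half_wchar_def split: if_splits)

lemma slack_nonpos_if_half_wchar_ne_one: "half_wchar q S x \<noteq> 1 \<Longrightarrow> slack S x \<le> 0"
  by (auto simp: half_wchar_def split: if_splits)

lemma prod_half_wchar:
  assumes "finite J"
  shows "(\<Prod>S\<in>J. half_wchar q S x)
    = (if \<forall>S\<in>J. 0 \<le> slack S x then \<Prod>S\<in>{S \<in> J. slack S x = 0}. q S else 0)"
proof (cases "\<forall>S\<in>J. 0 \<le> slack S x")
  case True
  then have "(\<Prod>S\<in>J. half_wchar q S x) = (\<Prod>S\<in>J. if slack S x = 0 then q S else 1)"
    by (intro prod.cong) (auto simp: half_wchar_def)
  also have "\<dots> = (\<Prod>S\<in>{S \<in> J. slack S x = 0}. q S)"
    by (rule prod.inter_filter[OF assms, symmetric])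
  finally show ?thesis using True by simp
next
  case False
  then obtain S where "S \<in> J" "half_wchar q S x = 0"
    by (auto simp: half_wchar_def not_le)
  then show ?thesis using assms False by auto
qed

lemma wchar_P_eq_prod: "wchar P q x = (\<Prod>S\<in>facets. half_wchar q S x)"
proof -
  have "{T. T facet_of P \<and> x \<in> T} = {S \<in> facets. slack S x = 0}" if "x \<in> P"
    using that facet_eq_slack_zero by (auto simp: facets_def)
  then show ?thesis
    using P_eq_slack_nonneg by (auto simp: wchar_def prod_half_wchar[OF finite_facets])
qed

lemma wchar_tangent_cone_meet:
  assumes v: "v \<in> vertices" and J: "J \<subseteq> facets_at v"
  shows "wchar (tangent_cone P (meet J)) (cone_weight P (meet J) q) x = (\<Prod>S\<in>J. half_wchar q S x)"
proof (cases "x \<in> cone_at J")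
  case False
  then show ?thesis
    using finite_subset[OF J finite_facets_at]
    by (auto simp: wchar_def tangent_cone_meet[OF v J] prod_half_wchar cone_at_def)
next
  case True
  let ?facet = "\<lambda>S. cone_at J \<inter> hyperplane S"
  have facets_x: "{T. T facet_of cone_at J \<and> x \<in> T} = ?facet ` {S \<in> J. slack S x = 0}"
    using facet_of_cone_at[OF v J] True by (auto simp: hyperplane_def)
  have "inj_on ?facet {S \<in> J. slack S x = 0}"
    using cone_at_facets_distinct[OF v J] by (intro inj_onI) blast
  then have "(\<Prod>T\<in>{T. T facet_of cone_at J \<and> x \<in> T}. cone_weight P (meet J) q T)
      = (\<Prod>S\<in>{S \<in> J. slack S x = 0}. cone_weight P (meet J) q (?facet S))"
    unfolding facets_x by (rule prod.reindex_cong) auto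
  also have "\<dots> = (\<Prod>S\<in>{S \<in> J. slack S x = 0}. q S)"
    using cone_weight_meet[OF v J] by simp
  finally show ?thesis
    using True finite_subset[OF J finite_facets_at]
    by (auto simp: wchar_def tangent_cone_meet[OF v J] prod_half_wchar cone_at_def)
qed

definition generic :: "'a \<Rightarrow> bool" where
  "generic c \<longleftrightarrow> (\<forall>v\<in>vertices. \<forall>S\<in>facets_at v. c \<bullet> edge_dir v S \<noteq> 0)"

definition descending :: "'a \<Rightarrow> 'a \<Rightarrow> 'a set set" where
  "descending c v = {S \<in> facets_at v. c \<bullet> edge_dir v S < 0}"

lemma generic_exists:
  assumes "finite Pos" "\<forall>p\<in>Pos. 0 < c0 \<bullet> p"
  obtains c where "generic c" "\<forall>p\<in>Pos. 0 < c \<bullet> p"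
proof -
  let ?X = "\<Union>v\<in>vertices. edge_dir v ` facets_at v"
  have fin: "finite ?X" using finite_vertices finite_facets_at by simp
  have nonzero: "0 \<notin> ?X"
    using inner_normal_edge_dir by fastforce
  obtain c where "\<forall>p\<in>Pos. 0 < c \<bullet> p" "\<forall>x\<in>?X. c \<bullet> x \<noteq> 0"
    by (rule generic_functional_exists[OF fin nonzero assms])
  then show ?thesis using that by (auto simp: generic_def)
qed

lemma generic_uminus: "generic (- c) \<longleftrightarrow> generic c"
  by (simp add: generic_def)

lemma descending_subset: "descending c v \<subseteq> facets_at v"
  by (auto simp: descending_def)

lemma descending_disjoint: "descending c v \<inter> descending (- c) v = {}"
  by (auto simp: descending_def)

lemma descending_Un: "generic c \<Longrightarrow> v \<in> vertices \<Longrightarrow> descending c v \<union> descending (- c) v = facets_at v"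
  by (auto simp: generic_def descending_def neq_iff)

lemma vertex_strict_minimum:
  assumes c: "generic c" and v: "v \<in> vertices"
    and J: "descending c v \<subseteq> J" "J \<subseteq> facets_at v" and y: "y \<in> meet J" "y \<noteq> v"
  shows "c \<bullet> v < c \<bullet> y"
proof -
  have terms: "0 \<le> slack S y * (c \<bullet> edge_dir v S)" if S: "S \<in> facets_at v" for S
  proof (cases "S \<in> J")
    case True
    then show ?thesis using y(1) by (simp add: meet_def)
  next
    case False
    then have "0 < c \<bullet> edge_dir v S" using c v J(1) S by (force simp: generic_def descending_def)
    moreover have "0 \<le> slack S y" using y(1) S facets_at_subset slack_nonneg by (auto simp: meet_def)
    ultimately show ?thesis by simp
  qed
  have diff: "c \<bullet> y - c \<bullet> v = (\<Sum>S\<in>facets_at v. slack S y * (c \<bullet> edge_dir v S))"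
    by (rule inner_diff_vertex[OF v])
  have "c \<bullet> y \<noteq> c \<bullet> v"
  proof
    assume "c \<bullet> y = c \<bullet> v"
    then have "(\<Sum>S\<in>facets_at v. slack S y * (c \<bullet> edge_dir v S)) = 0"
      using diff by simp
    then have "\<forall>S\<in>facets_at v. slack S y * (c \<bullet> edge_dir v S) = 0"
      using sum_nonneg_eq_0_iff[OF finite_facets_at, where f = "\<lambda>S. slack S y * (c \<bullet> edge_dir v S)"] terms
      by blast
    then have "\<forall>S\<in>facets_at v. slack S y = 0" using c v by (simp add: generic_def)
    then have "y - v = 0" using vertex_coordinates[OF v, of y] by simp
    then show False using y(2) by simp
  qed
  moreover have "0 \<le> (\<Sum>S\<in>facets_at v. slack S y * (c \<bullet> edge_dir v S))"
    using terms by (simp add: sum_nonneg)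
  ultimately show ?thesis using diff by simp
qed

lemma descending_subset_if_minimum:
  assumes v: "v \<in> vertices" and J: "J \<subseteq> facets_at v" and min: "\<forall>y\<in>meet J. c \<bullet> v \<le> c \<bullet> y"
  shows "descending c v \<subseteq> J"
proof
  fix S assume S: "S \<in> descending c v"
  then have S_at: "S \<in> facets_at v" by (simp add: descending_def)
  show "S \<in> J"
  proof (rule ccontr)
    assume "S \<notin> J"
    have "\<forall>T\<in>facets_at v. a T \<bullet> edge_dir v S \<le> 0"
      using inner_normal_edge_dir[OF v S_at] by simp
    then obtain t where t: "0 < t" "v + t *\<^sub>R edge_dir v S \<in> P"
      using feasible_direction[OF vertex_in_P[OF v]] by metis
    have "v + t *\<^sub>R edge_dir v S \<in> meet J"
      using t(2) J \<open>S \<notin> J\<close> slack_along_edge_dir[OF v S_at] by (auto simp: meet_def)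
    then have "c \<bullet> v \<le> c \<bullet> (v + t *\<^sub>R edge_dir v S)"
      using min by blast
    then have "0 \<le> t * (c \<bullet> edge_dir v S)"
      by (simp add: inner_add_right)
    moreover have "t * (c \<bullet> edge_dir v S) < 0"
      using t(1) S by (simp add: descending_def mult_pos_neg)
    ultimately show False by simp
  qed
qed

text \<open>The unique vertex is the c-minimal vertex of the face meet J.\<close>
lemma base_vertex_unique:
  assumes c: "generic c" and J: "J \<subseteq> facets" and ne: "meet J \<noteq> {}"
  shows "\<exists>!v. v \<in> vertices \<and> descending c v \<subseteq> J \<and> J \<subseteq> facets_at v"
proof -
  obtain v where v: "v \<in> meet J" "v \<in> vertices" "\<forall>y\<in>meet J. c \<bullet> v \<le> c \<bullet> y"
    using vertex_minimizing_on_face[OF meet_face_of[OF J] ne] by metis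
  have J_v: "J \<subseteq> facets_at v" using facets_at_meet[OF J v(1)] .
  have D_v: "descending c v \<subseteq> J" using descending_subset_if_minimum[OF v(2) J_v v(3)] .
  have "w = v" if w: "w \<in> vertices" "descending c w \<subseteq> J" "J \<subseteq> facets_at w" for w
  proof (rule ccontr)
    assume "w \<noteq> v"
    have "w \<in> meet J" using vertex_in_meet[OF w(1,3)] .
    then have "c \<bullet> v < c \<bullet> w" using vertex_strict_minimum[OF c v(2) D_v J_v] \<open>w \<noteq> v\<close> by blast
    moreover have "c \<bullet> w < c \<bullet> v" using vertex_strict_minimum[OF c w(1,2,3) v(1)] \<open>w \<noteq> v\<close> by blast
    ultimately show False by simp
  qed
  then show ?thesis using v(2) J_v D_v by blast
qed

lemma card_base_vertices:
  assumes c: "generic c" and J: "J \<subseteq> facets"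
  shows "card {v \<in> vertices. descending c v \<subseteq> J \<and> J \<subseteq> facets_at v} = (if meet J = {} then 0 else 1)"
proof (cases "meet J = {}")
  case True
  then have no_base: "{v \<in> vertices. descending c v \<subseteq> J \<and> J \<subseteq> facets_at v} = {}"
    using vertex_in_meet by blast
  show ?thesis unfolding no_base using True by simp
next
  case False
  then obtain v where "v \<in> vertices \<and> descending c v \<subseteq> J \<and> J \<subseteq> facets_at v"
    and "\<forall>w. w \<in> vertices \<and> descending c w \<subseteq> J \<and> J \<subseteq> facets_at w \<longrightarrow> w = v"
    using base_vertex_unique[OF c J] unfolding Ex1_def by blast
  then have one_base: "{v \<in> vertices. descending c v \<subseteq> J \<and> J \<subseteq> facets_at v} = {v}"
    by blast
  show ?thesis unfolding one_base using False by simp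
qed

lemma sum_meets_by_base_vertex:
  fixes G :: "'a set set \<Rightarrow> 'b::semiring_1"
  assumes c: "generic c"
  shows "(\<Sum>J\<in>{J \<in> Pow facets. meet J \<noteq> {}}. G J)
    = (\<Sum>v\<in>vertices. \<Sum>J\<in>{J. descending c v \<subseteq> J \<and> J \<subseteq> facets_at v}. G J)"
proof -
  have "(\<Sum>v\<in>vertices. \<Sum>J\<in>{J. descending c v \<subseteq> J \<and> J \<subseteq> facets_at v}. G J)
      = (\<Sum>v\<in>vertices. \<Sum>J\<in>{J \<in> Pow facets. descending c v \<subseteq> J \<and> J \<subseteq> facets_at v}. G J)"
    using facets_at_subset by (intro sum.cong refl) auto
  also have "\<dots> = (\<Sum>J\<in>Pow facets. \<Sum>v\<in>{v \<in> vertices. descending c v \<subseteq> J \<and> J \<subseteq> facets_at v}. G J)"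
    using finite_vertices finite_facets by (intro sum.swap_restrict) auto
  also have "\<dots> = (\<Sum>J\<in>Pow facets. if meet J \<noteq> {} then G J else 0)"
    using card_base_vertices[OF c] by (intro sum.cong refl) auto
  also have "\<dots> = (\<Sum>J\<in>{J \<in> Pow facets. meet J \<noteq> {}}. G J)"
    by (rule sum.inter_filter[symmetric]) (simp add: finite_facets)
  finally show ?thesis ..
qed

lemma sum_faces_eq_sum_meets:
  "(\<Sum>F\<in>{F. F face_of P \<and> F \<noteq> {}}. G F) = (\<Sum>J\<in>{J \<in> Pow facets. meet J \<noteq> {}}. G (meet J))"
proof (rule sum.reindex_bij_betw[symmetric])
  show "bij_betw meet {J \<in> Pow facets. meet J \<noteq> {}} {F. F face_of P \<and> F \<noteq> {}}"
  proof (rule bij_betwI')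
    fix J J' assume "J \<in> {J \<in> Pow facets. meet J \<noteq> {}}" "J' \<in> {J \<in> Pow facets. meet J \<noteq> {}}"
    then have "{S \<in> facets. meet J \<subseteq> S} = J" "{S \<in> facets. meet J' \<subseteq> S} = J'"
      by (simp_all add: facets_containing_meet)
    then show "meet J = meet J' \<longleftrightarrow> J = J'" by metis
  next
    fix J assume "J \<in> {J \<in> Pow facets. meet J \<noteq> {}}"
    then show "meet J \<in> {F. F face_of P \<and> F \<noteq> {}}" using meet_face_of by blast
  next
    fix F assume F: "F \<in> {F. F face_of P \<and> F \<noteq> {}}"
    then have "meet {S \<in> facets. F \<subseteq> S} = F" using face_eq_meet by auto
    then show "\<exists>J\<in>{J \<in> Pow facets. meet J \<noteq> {}}. F = meet J"
      using F by (intro bexI[of _ "{S \<in> facets. F \<subseteq> S}"]) auto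
  qed
qed

lemma face_sum_by_vertex:
  assumes c: "generic c"
  shows "(\<Sum>F\<in>{F. F face_of P \<and> F \<noteq> {}}.
      (-1) ^ nat (aff_dim F) * wchar (tangent_cone P F) (cone_weight P F q) x)
    = (\<Sum>v\<in>vertices. (\<Prod>S\<in>descending c v. half_wchar q S x)
        * (\<Prod>S\<in>descending (- c) v. half_wchar q S x - 1))"
proof -
  have vertex_term:
    "(\<Sum>J\<in>{J. descending c v \<subseteq> J \<and> J \<subseteq> facets_at v}.
        (-1) ^ nat (aff_dim (meet J)) * wchar (tangent_cone P (meet J)) (cone_weight P (meet J) q) x)
      = (\<Prod>S\<in>descending c v. half_wchar q S x) * (\<Prod>S\<in>descending (- c) v. half_wchar q S x - 1)"
    if v: "v \<in> vertices" for v
  proof -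
    let ?D = "descending c v" and ?U = "descending (- c) v"
    have DU: "?D \<union> ?U = facets_at v" by (rule descending_Un[OF c v])
    have fin: "finite ?D" "finite ?U"
      using finite_subset[OF descending_subset finite_facets_at] by auto
    have "(\<Sum>J\<in>{J. ?D \<subseteq> J \<and> J \<subseteq> facets_at v}.
        (-1) ^ nat (aff_dim (meet J)) * wchar (tangent_cone P (meet J)) (cone_weight P (meet J) q) x)
      = (\<Sum>J\<in>{J. ?D \<subseteq> J \<and> J \<subseteq> ?D \<union> ?U}. (-1) ^ card (?D \<union> ?U - J) * (\<Prod>S\<in>J. half_wchar q S x))"
      unfolding DU using aff_dim_meet[OF v] wchar_tangent_cone_meet[OF v] by (intro sum.cong refl) simp
    also have "\<dots> = (\<Prod>S\<in>?D. half_wchar q S x) * (\<Prod>S\<in>?U. half_wchar q S x - 1)"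
      by (rule sum_supersets_prod_diff_one[OF fin descending_disjoint])
    finally show ?thesis .
  qed
  show ?thesis
    unfolding sum_faces_eq_sum_meets sum_meets_by_base_vertex[OF c]
    using vertex_term by simp
qed

lemma face_sum_outside:
  assumes x: "x \<notin> P"
  shows "(\<Sum>F\<in>{F. F face_of P \<and> F \<noteq> {}}.
      (-1) ^ nat (aff_dim F) * wchar (tangent_cone P F) (cone_weight P F q) x) = 0"
proof -
  obtain a0 \<beta> where sep: "a0 \<bullet> x < \<beta>" "\<forall>y\<in>P. \<beta> < a0 \<bullet> y"
    using separating_hyperplane_closed_point[OF convex_P closed_P x] by blast
  have "0 < (- a0) \<bullet> (x - v)" if "v \<in> vertices" for v
    using sep(1) sep(2)[rule_format, OF vertex_in_P[OF that]] by (simp add: inner_diff_right)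
  then have "\<forall>p\<in>(\<lambda>v. x - v) ` vertices. 0 < (- a0) \<bullet> p" by blast
  then obtain c where c: "generic c" and "\<forall>p\<in>(\<lambda>v. x - v) ` vertices. 0 < c \<bullet> p"
    using generic_exists[OF finite_imageI[OF finite_vertices]] by blast
  then have x_above: "\<forall>v\<in>vertices. 0 < c \<bullet> (x - v)" by blast
  have "(\<Prod>S\<in>descending c v. half_wchar q S x) * (\<Prod>S\<in>descending (- c) v. half_wchar q S x - 1) = 0"
    if v: "v \<in> vertices" for v
  proof (rule ccontr)
    assume "\<not> ?thesis"
    then have nonzero: "\<forall>S\<in>descending c v. half_wchar q S x \<noteq> 0"
      "\<forall>S\<in>descending (- c) v. half_wchar q S x \<noteq> 1"
      using finite_subset[OF descending_subset finite_facets_at] by auto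
    have "slack S x * (c \<bullet> edge_dir v S) \<le> 0" if S: "S \<in> facets_at v" for S
    proof (cases "S \<in> descending c v")
      case True
      then have "0 \<le> slack S x" "c \<bullet> edge_dir v S < 0"
        using nonzero(1) slack_nonneg_if_half_wchar_nonzero by (auto simp: descending_def)
      then show ?thesis by (simp add: mult_nonneg_nonpos)
    next
      case False
      then have "S \<in> descending (- c) v" using S descending_Un[OF c v] by blast
      then have "slack S x \<le> 0" "0 < c \<bullet> edge_dir v S"
        using nonzero(2) slack_nonpos_if_half_wchar_ne_one by (auto simp: descending_def)
      then show ?thesis by (simp add: mult_nonpos_nonneg)
    qed
    then have "c \<bullet> x - c \<bullet> v \<le> 0"
      by (simp add: inner_diff_vertex[OF v] sum_nonpos)
    then show False using x_above[rule_format, OF v] by (simp add: inner_diff_right)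
  qed
  then show ?thesis unfolding face_sum_by_vertex[OF c] by (intro sum.neutral) blast
qed

lemma vertex_term_expand:
  fixes g :: "'a set \<Rightarrow> 'b::comm_semiring_1"
  assumes c: "generic c" and v: "v \<in> vertices"
  shows "(\<Prod>S\<in>descending c v. g S + 1) * (\<Prod>S\<in>descending (- c) v. g S)
    = (\<Sum>B\<in>{B. descending (- c) v \<subseteq> B \<and> B \<subseteq> facets_at v}. prod g B)"
proof -
  have "descending (- c) v \<union> descending c v = facets_at v"
    using descending_Un[OF c v] by blast
  then show ?thesis
    using sum_supersets_prod[OF _ _ descending_disjoint, of c v g]
      finite_subset[OF descending_subset finite_facets_at]
    by simp
qed

lemma mem_meet_if_prod_nonzero:
  assumes x: "x \<in> P" and B: "B \<subseteq> facets" "(\<Prod>S\<in>B. half_wchar q S x - 1) \<noteq> 0"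
  shows "x \<in> meet B"
proof -
  have "finite B" using B(1) finite_facets finite_subset by blast
  then have "half_wchar q S x \<noteq> 1" if "S \<in> B" for S
    using B(2) that by auto
  then have "slack S x = 0" if "S \<in> B" for S
    using that B(1) x slack_nonneg slack_nonpos_if_half_wchar_ne_one by (meson antisym subsetD)
  then show ?thesis using x by (simp add: meet_def)
qed

lemma face_sum_inside:
  assumes x: "x \<in> P"
  shows "(\<Sum>F\<in>{F. F face_of P \<and> F \<noteq> {}}.
      (-1) ^ nat (aff_dim F) * wchar (tangent_cone P F) (cone_weight P F q) x) = wchar P q x"
proof -
  obtain c where c: "generic c"
    using generic_exists[of "{}"] by auto
  then have c': "generic (- c)" by (simp add: generic_uminus)
  define g where "g S = half_wchar q S x - 1" for S
  have vertex_term: "(\<Prod>S\<in>descending c v. half_wchar q S x) * (\<Prod>S\<in>descending (- c) v. half_wchar q S x - 1)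
      = (\<Sum>B\<in>{B. descending (- c) v \<subseteq> B \<and> B \<subseteq> facets_at v}. prod g B)" if v: "v \<in> vertices" for v
    using vertex_term_expand[OF c v, of g] by (simp add: g_def)
  have "(\<Sum>F\<in>{F. F face_of P \<and> F \<noteq> {}}.
      (-1) ^ nat (aff_dim F) * wchar (tangent_cone P F) (cone_weight P F q) x)
    = (\<Sum>v\<in>vertices. \<Sum>B\<in>{B. descending (- c) v \<subseteq> B \<and> B \<subseteq> facets_at v}. prod g B)"
    unfolding face_sum_by_vertex[OF c] using vertex_term by simp
  also have "\<dots> = (\<Sum>B\<in>{B \<in> Pow facets. meet B \<noteq> {}}. prod g B)"
    by (rule sum_meets_by_base_vertex[OF c', symmetric])
  also have "\<dots> = (\<Sum>B\<in>Pow facets. prod g B)"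
  proof (rule sum.mono_neutral_left)
    show "\<forall>B\<in>Pow facets - {B \<in> Pow facets. meet B \<noteq> {}}. prod g B = 0"
      using mem_meet_if_prod_nonzero[OF x] by (auto simp: g_def)
  qed (auto simp: finite_facets)
  also have "\<dots> = (\<Prod>S\<in>facets. g S + 1)"
    using prod_add[OF finite_facets, of g "\<lambda>_. 1"] by simp
  also have "\<dots> = wchar P q x"
    by (simp add: g_def wchar_P_eq_prod)
  finally show ?thesis .
qed

end

theorem mainTheorem1:
  fixes P :: "'a::euclidean_space set" and q :: "'a set \<Rightarrow> complex"
  assumes "simple_polytope P"
    and "aff_dim P = int DIM('a)"
  shows "wchar P q =
    (\<lambda>x. \<Sum>F\<in>{F. F face_of P \<and> F \<noteq> {}}.
        (-1) ^ nat (aff_dim F) * wchar (tangent_cone P F) (cone_weight P F q) x)"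
proof -
  have "polyhedron P"
    using assms(1) by (simp add: simple_polytope_def polytope_imp_polyhedron)
  then obtain a b where "\<And>S. S facet_of P \<Longrightarrow>
      a S \<noteq> 0 \<and> P \<subseteq> {x. a S \<bullet> x \<le> b S} \<and> S = P \<inter> {x. a S \<bullet> x = b S}"
    using polyhedron_facet_normals by metis
  then interpret full_simple_polytope P a b
    using assms by unfold_locales
  show ?thesis
  proof
    fix x
    show "wchar P q x = (\<Sum>F\<in>{F. F face_of P \<and> F \<noteq> {}}.
        (-1) ^ nat (aff_dim F) * wchar (tangent_cone P F) (cone_weight P F q) x)"
      by (cases "x \<in> P") (simp_all add: face_sum_inside face_sum_outside wchar_def[of P])
  qed
qed

end
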